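(* Let $G$ be a compact group with Haar probability measure $dg$, acting linearly and continuously on a finite-dimensional real vector space $V$. Fix $v\in V$ and a linear function $\ell:V\to\mathbb{R}$, and let $f(g)=\ell(gv)$. For a positive integer $k$, let $$D_k=\dim \operatorname{span}\{g v^{\otimes k}: g\in G\}$$ be the dimension of the linear span of the orbit of $v^{\otimes k}$ in $V^{\otimes k}$. Then $$\|f\|_{2k}\le \|f\|_\infty\le D_k^{1/(2k)}\,\|f\|_{2k}.$$
   Context: $V^{\otimes k}$ is the $k$-th tensor power of $V$, with $G$ acting diagonally: $g(v_1\otimes\cdots\otimes v_k)=gv_1\otimes\cdots\otimes gv_k$; $v^{\otimes k}=v\otimes\cdots\otimes v$ ($k$ factors). For $f:G\to\mathbb{R}$, $\|f\|_\infty=\max_{g\in G}|f(g)|$ and $\|f\|_{2k}=\left(\int_G f^{2k}(g)\,dg\right)^{1/(2k)}$. *)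

theory Defs
  imports "HOL-Analysis.Analysis" "HOL-Probability.Probability" "HOL-Algebra.Group"
begin

definition compact_group :: "('g::topological_space, 'b) monoid_scheme \<Rightarrow> bool" where
  "compact_group G \<longleftrightarrow> group G \<and> compact (carrier G) \<and>
     continuous_on (carrier G \<times> carrier G) (\<lambda>(x, y). x \<otimes>\<^bsub>G\<^esub> y) \<and>
     continuous_on (carrier G) (\<lambda>x. inv\<^bsub>G\<^esub> x)"

definition haar_prob :: "('g::topological_space, 'b) monoid_scheme \<Rightarrow> 'g measure \<Rightarrow> bool" where
  "haar_prob G \<mu> \<longleftrightarrow> prob_space \<mu> \<and> space \<mu> = carrier G \<and>
     sets \<mu> = sets (restrict_space borel (carrier G)) \<and>
     (\<forall>g\<in>carrier G. \<forall>A\<in>sets \<mu>.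
        emeasure \<mu> ((\<lambda>h. g \<otimes>\<^bsub>G\<^esub> h) ` A) = emeasure \<mu> A \<and>
        emeasure \<mu> ((\<lambda>h. h \<otimes>\<^bsub>G\<^esub> g) ` A) = emeasure \<mu> A)"

definition continuous_linear_action ::
  "('g::topological_space, 'b) monoid_scheme \<Rightarrow> ('g \<Rightarrow> real^'n^'n) \<Rightarrow> bool" where
  "continuous_linear_action G \<rho> \<longleftrightarrow>
     \<rho> \<one>\<^bsub>G\<^esub> = mat 1 \<and>
     (\<forall>g\<in>carrier G. \<forall>h\<in>carrier G. \<rho> (g \<otimes>\<^bsub>G\<^esub> h) = \<rho> g ** \<rho> h) \<and>
     continuous_on (carrier G) \<rho>"

text \<open>k-th tensor power of R^n, realised as R^('n^'k) with k = CARD('k):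
  coordinates indexed by k-tuples of basis indices.\<close>
definition tensor_pow :: "real^'n \<Rightarrow> real^('n^'k)" where
  "tensor_pow x = (\<chi> \<sigma>. \<Prod>j\<in>UNIV. x $ (\<sigma> $ j))"

definition tensor_act :: "real^'n^'n \<Rightarrow> real^('n^'k) \<Rightarrow> real^('n^'k)" where
  "tensor_act A T = (\<chi> \<sigma>. \<Sum>\<tau>\<in>UNIV. (\<Prod>j\<in>UNIV. A $ (\<sigma> $ j) $ (\<tau> $ j)) * T $ \<tau>)"

definition sup_norm :: "('g, 'b) monoid_scheme \<Rightarrow> ('g \<Rightarrow> real) \<Rightarrow> real" where
  "sup_norm G f = (SUP g\<in>carrier G. \<bar>f g\<bar>)"

definition Lp_norm_even :: "'g measure \<Rightarrow> nat \<Rightarrow> ('g \<Rightarrow> real) \<Rightarrow> real" where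
  "Lp_norm_even \<mu> p f = (\<integral>g. (f g) ^ p \<partial>\<mu>) powr (1 / real p)"

end

theory Submission
  imports Defs
begin

(*
  Write l = <c, ->.  Then f(g)^k = <c^\<otimes>k, g v^\<otimes>k> is a matrix coefficient of the representation
  on V^\<otimes>k, and the coefficients phi_w(g) = <c^\<otimes>k, g w>, for w in the span W of the orbit of
  v^\<otimes>k, form a space of continuous functions closed under right translation.  Choose w_1, ..., w_m
  in W whose coefficients are L2-orthonormal and span all coefficients (a coefficient of L2-norm 0
  vanishes, as Haar measure has full support); then m \<le> dim W = D_k.  Put K(x) = \<Sum>i. phi_{w_i}(x)^2.
  By Cauchy-Schwarz phi_w(x)^2 \<le> K(x) ||phi_w||_2^2, with equality for a suitable w; comparing with
  the right translate of that w gives K(x y) \<le> K(x).  Hence K is constant, equal to its mean m.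
  At a maximum point of |f| this yields ||f||_\<infinity>^(2k) \<le> D_k ||f||_(2k)^(2k); the other inequality
  holds because Haar measure is a probability measure.
*)

section \<open>Tensor powers\<close>

lemma prod_sum_vec:
  fixes a :: "'k::finite \<Rightarrow> 'n::finite \<Rightarrow> real"
  shows "(\<Prod>j\<in>UNIV. \<Sum>t\<in>UNIV. a j t) = (\<Sum>\<tau>\<in>(UNIV::('n^'k) set). \<Prod>j\<in>UNIV. a j (\<tau> $ j))"
proof -
  have bij: "bij_betw vec_lambda (UNIV :: ('k \<Rightarrow> 'n) set) (UNIV::('n^'k) set)"
    by (auto intro!: bij_betwI[of _ _ _ vec_nth] simp: vec_eq_iff)
  have "(\<Prod>j\<in>UNIV. \<Sum>t\<in>UNIV. a j t) = (\<Sum>\<tau>\<in>PiE UNIV (\<lambda>_. UNIV). \<Prod>j\<in>UNIV. a j (\<tau> j))"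
    by (rule prod_sum_PiE) auto
  also have "\<dots> = (\<Sum>\<tau>\<in>UNIV. \<Prod>j\<in>UNIV. a j (\<tau> j))"
    by simp
  also have "\<dots> = (\<Sum>\<tau>\<in>(UNIV::('n^'k) set). \<Prod>j\<in>UNIV. a j (\<tau> $ j))"
    using sum.reindex_bij_betw[OF bij, of "\<lambda>\<tau>. \<Prod>j\<in>UNIV. a j (\<tau> $ j)"] by simp
  finally show ?thesis .
qed

lemma inner_tensor_pow:
  "tensor_pow x \<bullet> (tensor_pow y :: real^('n::finite^'k::finite)) = (x \<bullet> y) ^ CARD('k)"
proof -
  have "tensor_pow x \<bullet> (tensor_pow y :: real^('n::finite^'k::finite))
      = (\<Sum>\<sigma>\<in>(UNIV::('n^'k) set). \<Prod>j\<in>UNIV. x $ (\<sigma> $ j) * y $ (\<sigma> $ j))"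
    by (simp add: tensor_pow_def inner_vec_def prod.distrib)
  also have "\<dots> = (\<Prod>j\<in>(UNIV::'k set). x \<bullet> y)"
    using prod_sum_vec[where 'k='k, of "\<lambda>j t. x $ t * y $ t"] by (simp add: inner_vec_def)
  finally show ?thesis by simp
qed

lemma tensor_act_tensor_pow:
  "tensor_act A (tensor_pow x :: real^('n::finite^'k::finite)) = tensor_pow (A *v x)"
proof -
  have "tensor_act A (tensor_pow x :: real^('n::finite^'k::finite)) $ \<sigma> = tensor_pow (A *v x) $ \<sigma>" for \<sigma> :: "'n^'k"
    unfolding tensor_act_def tensor_pow_def matrix_vector_mult_def
    using prod_sum_vec[of "\<lambda>j t. A $ (\<sigma> $ j) $ t * x $ t"]
    by (simp add: prod.distrib)
  then show ?thesis by (simp add: vec_eq_iff)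
qed

lemma tensor_act_tensor_act:
  "tensor_act A (tensor_act B T) = tensor_act (A ** B) (T :: real^('n::finite^'k::finite))"
proof -
  have "tensor_act A (tensor_act B T) $ \<sigma> = tensor_act (A ** B) T $ \<sigma>" for \<sigma> :: "'n^'k"
  proof -
    have "tensor_act A (tensor_act B T) $ \<sigma> =
      (\<Sum>\<tau>\<in>UNIV. \<Sum>\<upsilon>\<in>UNIV. (\<Prod>j\<in>UNIV. A $ (\<sigma> $ j) $ (\<tau> $ j))
                          * (\<Prod>j\<in>UNIV. B $ (\<tau> $ j) $ (\<upsilon> $ j)) * T $ \<upsilon>)"
      unfolding tensor_act_def by (simp add: sum_distrib_left mult.assoc)
    also have "\<dots> = (\<Sum>\<upsilon>\<in>UNIV. (\<Sum>\<tau>\<in>UNIV. \<Prod>j\<in>UNIV. A $ (\<sigma> $ j) $ (\<tau> $ j) * B $ (\<tau> $ j) $ (\<upsilon> $ j))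
                          * T $ \<upsilon>)"
      by (subst sum.swap) (simp add: sum_distrib_right prod.distrib)
    also have "\<dots> = tensor_act (A ** B) T $ \<sigma>"
      unfolding tensor_act_def matrix_matrix_mult_def
      by (simp add: prod_sum_vec[where a = "\<lambda>j t. A $ (\<sigma> $ j) $ t * B $ t $ (_ $ j)"])
    finally show ?thesis .
  qed
  then show ?thesis by (simp add: vec_eq_iff)
qed

lemma linear_tensor_act: "linear (tensor_act A)"
  unfolding tensor_act_def
  by (intro linearI) (auto simp: vec_eq_iff sum.distrib algebra_simps sum_distrib_left)

lemma continuous_on_tensor_act:
  assumes "continuous_on S \<rho>"
  shows "continuous_on S (\<lambda>g. tensor_act (\<rho> g) T)"
  unfolding tensor_act_def
  by (intro continuous_intros continuous_on_component assms)

lemma continuous_on_linear_matrix_vector: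
  fixes l :: "real^'n \<Rightarrow> real"
  assumes "linear l" "continuous_on S \<rho>"
  shows "continuous_on S (\<lambda>g. l (\<rho> g *v v))"
proof -
  have "continuous_on S (\<lambda>g. \<rho> g *v v)"
    unfolding matrix_vector_mult_def by (intro continuous_intros continuous_on_component assms(2))
  then show ?thesis
    using bounded_linear.continuous_on assms(1) linear_conv_bounded_linear by blast
qed

section \<open>Orthonormal systems of a semidefinite form\<close>

definition orthonormal_wrt :: "('v \<Rightarrow> 'v \<Rightarrow> real) \<Rightarrow> 'v set \<Rightarrow> bool" where
  "orthonormal_wrt Q E \<longleftrightarrow> (\<forall>e\<in>E. \<forall>e'\<in>E. Q e e' = (if e = e' then 1 else 0))"

lemma orthonormal_wrt_sum_scaleR:
  assumes lin: "\<And>w. linear (\<lambda>u. Q u w)" and E: "orthonormal_wrt Q E" "finite E" and "e' \<in> E"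
  shows "Q (\<Sum>e\<in>E. c e *\<^sub>R e) e' = c e'"
proof -
  have "Q (\<Sum>e\<in>E. c e *\<^sub>R e) e' = (\<Sum>e\<in>E. c e * Q e e')"
    by (simp add: linear_sum[OF lin] linear_scale[OF lin])
  also have "\<dots> = (\<Sum>e\<in>E. if e = e' then c e else 0)"
    using E \<open>e' \<in> E\<close> unfolding orthonormal_wrt_def by (intro sum.cong) auto
  finally show ?thesis using E \<open>e' \<in> E\<close> by simp
qed

lemma orthonormal_wrt_independent:
  assumes lin: "\<And>w. linear (\<lambda>u. Q u w)" and E: "orthonormal_wrt Q E" "finite E"
  shows "independent E"
proof
  assume "dependent E"
  then obtain c e where e: "e \<in> E" "c e \<noteq> 0" and "(\<Sum>e\<in>E. c e *\<^sub>R e) = 0"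
    using dependent_finite[OF \<open>finite E\<close>] by blast
  then have "Q (\<Sum>e\<in>E. c e *\<^sub>R e) e = 0"
    using linear_0[OF lin] by simp
  then show False
    using orthonormal_wrt_sum_scaleR[OF lin E e(1)] e(2) by simp
qed

lemma orthonormal_wrt_insert:
  assumes "orthonormal_wrt Q E" "Q e0 e0 = 1" "\<And>e. e \<in> E \<Longrightarrow> Q e0 e = 0"
    and "\<And>u w. Q u w = Q w u"
  shows "orthonormal_wrt Q (insert e0 E)"
  using assms unfolding orthonormal_wrt_def by auto

text \<open>Q is only positive semidefinite, so the library's orthonormal bases (which need an inner
  product) are not available; a maximal orthonormal system leaves a null residual instead.\<close>

lemma ex_orthonormal_wrt_null_residual:
  fixes Q :: "'v::euclidean_space \<Rightarrow> 'v \<Rightarrow> real"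
  assumes lin: "\<And>w. linear (\<lambda>u. Q u w)" and sym: "\<And>u w. Q u w = Q w u"
    and nonneg: "\<And>u. 0 \<le> Q u u" and W: "subspace W"
  obtains E where "finite E" "E \<subseteq> W" "orthonormal_wrt Q E"
    "\<And>u. u \<in> W \<Longrightarrow> Q (u - (\<Sum>e\<in>E. Q u e *\<^sub>R e)) (u - (\<Sum>e\<in>E. Q u e *\<^sub>R e)) = 0"
proof -
  define ON where "ON E \<longleftrightarrow> finite E \<and> E \<subseteq> W \<and> orthonormal_wrt Q E" for E
  have "card E < dim W + 1" if "ON E" for E
    using that independent_card_le_dim[of E W] orthonormal_wrt_independent[of Q E, OF lin]
    unfolding ON_def by (simp add: less_Suc_eq_le)
  moreover have "ON {}"
    unfolding ON_def orthonormal_wrt_def by simp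
  ultimately obtain E where E: "ON E" and max: "\<And>E'. ON E' \<Longrightarrow> card E' \<le> card E"
    using ex_has_greatest_nat[of ON "{}" card "dim W + 1"] by blast
  then have fin: "finite E" and EW: "E \<subseteq> W" and ortho: "orthonormal_wrt Q E"
    unfolding ON_def by auto
  have "Q r r = 0" if "u \<in> W" and r: "r = u - (\<Sum>e\<in>E. Q u e *\<^sub>R e)" for u r
  proof (rule ccontr)
    assume "Q r r \<noteq> 0"
    with nonneg have pos: "Q r r > 0" by (simp add: order_less_le)
    have rW: "r \<in> W"
      unfolding r using W \<open>u \<in> W\<close> EW by (intro subspace_diff subspace_sum subspace_scale) auto
    have r_perp: "Q r e = 0" if "e \<in> E" for e
      unfolding r linear_diff[OF lin] orthonormal_wrt_sum_scaleR[OF lin ortho fin that] by simp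
    define e0 where "e0 = (1 / sqrt (Q r r)) *\<^sub>R r"
    have "Q e0 e0 = (1 / sqrt (Q r r)) * Q r e0"
      unfolding e0_def by (simp only: linear_scale[OF lin] real_scaleR_def)
    also have "Q r e0 = (1 / sqrt (Q r r)) * Q r r"
      unfolding e0_def by (subst sym) (simp only: linear_scale[OF lin] real_scaleR_def)
    finally have e0_norm: "Q e0 e0 = 1"
      using pos by (simp add: field_simps)
    have e0_perp: "Q e0 e = 0" if "e \<in> E" for e
      unfolding e0_def linear_scale[OF lin] r_perp[OF that] by simp
    then have "e0 \<notin> E" using e0_norm by force
    moreover have "ON (insert e0 E)"
      unfolding ON_def using fin EW subspace_scale[OF W rW] orthonormal_wrt_insert[OF ortho e0_norm e0_perp sym]
      by (simp add: e0_def)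
    ultimately show False using max[of "insert e0 E"] fin by simp
  qed
  then show ?thesis using that fin EW ortho by blast
qed

section \<open>Right-invariant finite-dimensional spaces of functions\<close>

locale right_invariant_function_space = group G + prob_space \<mu>
  for G :: "('g, 'b) monoid_scheme" (structure) and \<mu> :: "'g measure" +
  fixes \<phi> :: "'v::euclidean_space \<Rightarrow> 'g \<Rightarrow> real" and W :: "'v set"
  assumes space_eq: "space \<mu> = carrier G"
    and measurable_mult_right: "\<And>y. y \<in> carrier G \<Longrightarrow> (\<lambda>g. g \<otimes> y) \<in> measurable \<mu> \<mu>"
    and distr_mult_right: "\<And>y. y \<in> carrier G \<Longrightarrow> distr \<mu> \<mu> (\<lambda>g. g \<otimes> y) = \<mu>"
    and linear_eval: "\<And>g. linear (\<lambda>w. \<phi> w g)"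
    and integrable_mult: "\<And>u w. integrable \<mu> (\<lambda>g. \<phi> u g * \<phi> w g)"
    and null_imp_zero: "\<And>w x. w \<in> W \<Longrightarrow> (\<integral>g. \<phi> w g * \<phi> w g \<partial>\<mu>) = 0 \<Longrightarrow> x \<in> carrier G \<Longrightarrow> \<phi> w x = 0"
    and subspace_W: "subspace W"
    and translate_closed: "\<And>y w. y \<in> carrier G \<Longrightarrow> w \<in> W \<Longrightarrow> \<exists>w'\<in>W. \<forall>g\<in>carrier G. \<phi> w' g = \<phi> w (g \<otimes> y)"
begin

definition gram :: "'v \<Rightarrow> 'v \<Rightarrow> real" where
  "gram u w = (\<integral>g. \<phi> u g * \<phi> w g \<partial>\<mu>)"

lemma linear_gram: "linear (\<lambda>u. gram u w)"
  unfolding gram_def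
  by (intro linearI)
    (simp_all add: linear_add[OF linear_eval] linear_scale[OF linear_eval] distrib_right
       integrable_mult mult.assoc)

lemma gram_commute: "gram u w = gram w u"
  unfolding gram_def by (simp add: mult.commute)

lemma gram_self_nonneg: "0 \<le> gram u u"
  unfolding gram_def by simp

lemma gram_translate:
  assumes y: "y \<in> carrier G" and w': "\<And>g. g \<in> carrier G \<Longrightarrow> \<phi> w' g = \<phi> w (g \<otimes> y)"
  shows "gram w' w' = gram w w"
proof -
  have "gram w' w' = (\<integral>g. \<phi> w (g \<otimes> y) * \<phi> w (g \<otimes> y) \<partial>\<mu>)"
    unfolding gram_def using w' space_eq by (intro Bochner_Integration.integral_cong) auto
  also have "\<dots> = (\<integral>h. \<phi> w h * \<phi> w h \<partial>distr \<mu> \<mu> (\<lambda>g. g \<otimes> y))"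
    by (rule integral_distr[symmetric, OF measurable_mult_right[OF y]])
      (simp add: borel_measurable_integrable integrable_mult)
  finally show ?thesis
    unfolding distr_mult_right[OF y] gram_def .
qed

definition gram_basis :: "'v set \<Rightarrow> bool" where
  "gram_basis E \<longleftrightarrow> finite E \<and> E \<subseteq> W \<and> orthonormal_wrt gram E \<and>
     (\<forall>u\<in>W. \<forall>x\<in>carrier G. \<phi> u x = (\<Sum>e\<in>E. gram u e * \<phi> e x))"

lemma ex_gram_basis: "\<exists>E. gram_basis E"
proof -
  obtain E where E: "finite E" "E \<subseteq> W" "orthonormal_wrt gram E"
    and null: "\<And>u. u \<in> W \<Longrightarrow> gram (u - (\<Sum>e\<in>E. gram u e *\<^sub>R e)) (u - (\<Sum>e\<in>E. gram u e *\<^sub>R e)) = 0"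
    using ex_orthonormal_wrt_null_residual[OF linear_gram gram_commute gram_self_nonneg subspace_W] by blast
  have "\<phi> u x = (\<Sum>e\<in>E. gram u e * \<phi> e x)" if "u \<in> W" "x \<in> carrier G" for u x
  proof -
    have "u - (\<Sum>e\<in>E. gram u e *\<^sub>R e) \<in> W"
      using subspace_W E(2) \<open>u \<in> W\<close> by (intro subspace_diff subspace_sum subspace_scale) auto
    then have "\<phi> (u - (\<Sum>e\<in>E. gram u e *\<^sub>R e)) x = 0"
      using null[OF \<open>u \<in> W\<close>] unfolding gram_def by (rule null_imp_zero[OF _ _ \<open>x \<in> carrier G\<close>])
    then show ?thesis
      by (simp add: linear_diff[OF linear_eval] linear_sum[OF linear_eval] linear_scale[OF linear_eval])
  qed
  then show ?thesis
    using E unfolding gram_basis_def by blast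
qed

lemma gram_basis_card_le_dim:
  assumes "gram_basis E"
  shows "card E \<le> dim W"
  using assms independent_card_le_dim[of E W] orthonormal_wrt_independent[of gram E, OF linear_gram]
  unfolding gram_basis_def by simp

text \<open>The diagonal of the reproducing kernel of W in L2.\<close>

definition kernel :: "'v set \<Rightarrow> 'g \<Rightarrow> real" where
  "kernel E x = (\<Sum>e\<in>E. (\<phi> e x)\<^sup>2)"

lemma kernel_nonneg: "0 \<le> kernel E x"
  unfolding kernel_def by (simp add: sum_nonneg)

lemma integrable_kernel: "integrable \<mu> (kernel E)"
  unfolding kernel_def power2_eq_square by (simp add: integrable_mult)

lemma integral_kernel: "finite E \<Longrightarrow> (\<integral>x. kernel E x \<partial>\<mu>) = (\<Sum>e\<in>E. gram e e)"
  unfolding kernel_def gram_def power2_eq_square by (simp add: integrable_mult)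

context
  fixes E assumes E: "gram_basis E"
begin

lemma gram_self_eq_sum:
  assumes "u \<in> W"
  shows "gram u u = (\<Sum>e\<in>E. (gram u e)\<^sup>2)"
proof -
  have "gram u u = (\<integral>g. (\<Sum>e\<in>E. gram u e * (\<phi> u g * \<phi> e g)) \<partial>\<mu>)"
    unfolding gram_def[of u u]
  proof (rule Bochner_Integration.integral_cong)
    fix g assume "g \<in> space \<mu>"
    then have "\<phi> u g = (\<Sum>e\<in>E. gram u e * \<phi> e g)"
      using E assms space_eq unfolding gram_basis_def by blast
    then have "\<phi> u g * \<phi> u g = \<phi> u g * (\<Sum>e\<in>E. gram u e * \<phi> e g)"
      by (rule arg_cong)
    also have "\<dots> = (\<Sum>e\<in>E. gram u e * (\<phi> u g * \<phi> e g))"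
      by (simp add: sum_distrib_left mult.left_commute)
    finally show "\<phi> u g * \<phi> u g = (\<Sum>e\<in>E. gram u e * (\<phi> u g * \<phi> e g))" .
  qed simp
  also have "\<dots> = (\<Sum>e\<in>E. gram u e * gram u e)"
    unfolding gram_def by (simp add: integrable_mult)
  finally show ?thesis by (simp add: power2_eq_square)
qed

lemma eval_sq_le_gram_mult_kernel:
  assumes "u \<in> W" "x \<in> carrier G"
  shows "(\<phi> u x)\<^sup>2 \<le> gram u u * kernel E x"
  using Cauchy_Schwarz_ineq_sum[of "gram u" "\<lambda>e. \<phi> e x" E] E assms gram_self_eq_sum[OF assms(1)]
  unfolding kernel_def gram_basis_def by (simp add: power2_eq_square)

lemma kernel_attained:
  assumes "x \<in> carrier G"
  obtains u where "u \<in> W" "\<phi> u x = kernel E x" "gram u u = kernel E x"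
proof
  define u where "u = (\<Sum>e\<in>E. \<phi> e x *\<^sub>R e)"
  have fin: "finite E" and EW: "E \<subseteq> W" and ortho: "orthonormal_wrt gram E"
    using E unfolding gram_basis_def by auto
  show "u \<in> W"
    unfolding u_def using subspace_W EW by (intro subspace_sum subspace_scale) auto
  show "\<phi> u x = kernel E x"
    unfolding u_def kernel_def
    by (simp add: linear_sum[OF linear_eval] linear_scale[OF linear_eval] power2_eq_square)
  have "gram u e = \<phi> e x" if "e \<in> E" for e
    unfolding u_def by (rule orthonormal_wrt_sum_scaleR[OF linear_gram ortho fin that])
  then show "gram u u = kernel E x"
    unfolding gram_self_eq_sum[OF \<open>u \<in> W\<close>] kernel_def by simp
qed

lemma kernel_mult_right_le:
  assumes x: "x \<in> carrier G" and y: "y \<in> carrier G"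
  shows "kernel E (x \<otimes> y) \<le> kernel E x"
proof -
  obtain u where u: "u \<in> W" "\<phi> u (x \<otimes> y) = kernel E (x \<otimes> y)" "gram u u = kernel E (x \<otimes> y)"
    using kernel_attained x y by blast
  obtain u' where u': "u' \<in> W" "\<And>g. g \<in> carrier G \<Longrightarrow> \<phi> u' g = \<phi> u (g \<otimes> y)"
    using translate_closed[OF y u(1)] by blast
  have "(kernel E (x \<otimes> y))\<^sup>2 = (\<phi> u' x)\<^sup>2"
    using u'(2)[OF x] u(2) by simp
  also have "\<dots> \<le> gram u' u' * kernel E x"
    using eval_sq_le_gram_mult_kernel[OF u'(1) x] .
  also have "\<dots> = kernel E (x \<otimes> y) * kernel E x"
    using gram_translate[OF y u'(2)] u(3) by simp
  finally have "kernel E (x \<otimes> y) * kernel E (x \<otimes> y) \<le> kernel E (x \<otimes> y) * kernel E x"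
    by (simp add: power2_eq_square)
  then show ?thesis
    using kernel_nonneg[of E x] kernel_nonneg[of E "x \<otimes> y"]
    by (cases "kernel E (x \<otimes> y) = 0") (simp_all add: mult_le_cancel_left_pos)
qed

lemma kernel_le_dim:
  assumes x: "x \<in> carrier G"
  shows "kernel E x \<le> dim W"
proof -
  have "kernel E x \<le> kernel E z" if "z \<in> carrier G" for z
    using kernel_mult_right_le[OF that, of "inv z \<otimes> x"] x that by (simp add: m_assoc[symmetric])
  then have "(\<integral>z. kernel E x \<partial>\<mu>) \<le> (\<integral>z. kernel E z \<partial>\<mu>)"
    using space_eq by (intro integral_mono integrable_kernel) auto
  then have "kernel E x \<le> (\<Sum>e\<in>E. gram e e)"
    using E integral_kernel by (simp add: prob_space gram_basis_def)
  also have "\<dots> = card E"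
    using E unfolding gram_basis_def orthonormal_wrt_def by simp
  finally show ?thesis
    using gram_basis_card_le_dim[OF E] by linarith
qed

end

theorem eval_sq_le_dim_mult_gram:
  assumes "w \<in> W" "x \<in> carrier G"
  shows "(\<phi> w x)\<^sup>2 \<le> dim W * gram w w"
proof -
  obtain E where E: "gram_basis E"
    using ex_gram_basis by blast
  have "(\<phi> w x)\<^sup>2 \<le> gram w w * kernel E x"
    by (rule eval_sq_le_gram_mult_kernel[OF E assms])
  also have "\<dots> \<le> gram w w * dim W"
    by (rule mult_left_mono[OF kernel_le_dim[OF E assms(2)] gram_self_nonneg])
  finally show ?thesis
    by (simp add: mult.commute)
qed

end

section \<open>Compact groups with Haar measure\<close>

locale compact_haar_group =
  fixes G :: "('g::topological_space, 'b) monoid_scheme" (structure) and \<mu> :: "'g measure"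
  assumes compact_group: "compact_group G" and haar_prob: "haar_prob G \<mu>"
begin

sublocale group G
  using compact_group unfolding compact_group_def by simp

sublocale prob_space \<mu>
  using haar_prob unfolding haar_prob_def by simp

lemma space_eq: "space \<mu> = carrier G"
  using haar_prob unfolding haar_prob_def by simp

lemma sets_eq: "sets \<mu> = sets (restrict_space borel (carrier G))"
  using haar_prob unfolding haar_prob_def by simp

lemma compact_carrier: "compact (carrier G)"
  using compact_group unfolding compact_group_def by simp

lemma emeasure_image_mult_right:
  "y \<in> carrier G \<Longrightarrow> A \<in> sets \<mu> \<Longrightarrow> emeasure \<mu> ((\<lambda>h. h \<otimes> y) ` A) = emeasure \<mu> A"
  using haar_prob unfolding haar_prob_def by simp

lemma continuous_on_mult_right:
  assumes y: "y \<in> carrier G"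
  shows "continuous_on (carrier G) (\<lambda>h. h \<otimes> y)"
proof -
  have "continuous_on (carrier G \<times> carrier G) (\<lambda>(x, y). x \<otimes> y)"
    using compact_group unfolding compact_group_def by simp
  moreover have "continuous_on (carrier G) (\<lambda>h. (h, y))"
    by (intro continuous_intros)
  moreover have "(\<lambda>h. (h, y)) ` carrier G \<subseteq> carrier G \<times> carrier G"
    using y by auto
  ultimately show ?thesis
    using continuous_on_compose2 by fastforce
qed

lemma sets_relatively_open: "open A \<Longrightarrow> A \<inter> carrier G \<in> sets \<mu>"
  unfolding sets_eq sets_restrict_space by (metis borel_open Int_commute image_eqI)

lemma measurable_continuous_on_carrier:
  "continuous_on (carrier G) k \<Longrightarrow> k \<in> borel_measurable \<mu>"
  unfolding measurable_cong_sets[OF sets_eq refl] by (rule borel_measurable_continuous_on_restrict)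

lemma integrable_continuous_on_carrier:
  fixes k :: "'g \<Rightarrow> real"
  assumes k: "continuous_on (carrier G) k"
  shows "integrable \<mu> k"
proof -
  obtain B where "\<And>x. x \<in> carrier G \<Longrightarrow> norm (k x) \<le> B"
    using compact_imp_bounded[OF compact_continuous_image[OF k compact_carrier]]
    unfolding bounded_iff by auto
  then show ?thesis
    using measurable_continuous_on_carrier[OF k] space_eq
    by (intro integrable_const_bound[where B = B]) auto
qed

lemma measurable_mult_right: "y \<in> carrier G \<Longrightarrow> (\<lambda>h. h \<otimes> y) \<in> measurable \<mu> \<mu>"
  unfolding measurable_cong_sets[OF sets_eq sets_eq]
  by (rule measurable_restrict_space2)
    (auto simp: space_restrict_space
      intro: borel_measurable_continuous_on_restrict[OF continuous_on_mult_right])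

lemma distr_mult_right:
  assumes y: "y \<in> carrier G"
  shows "distr \<mu> \<mu> (\<lambda>h. h \<otimes> y) = \<mu>"
proof (rule measure_eqI)
  fix A assume "A \<in> sets (distr \<mu> \<mu> (\<lambda>h. h \<otimes> y))"
  then have A: "A \<in> sets \<mu>" by simp
  then have "A \<subseteq> carrier G"
    using sets.sets_into_space space_eq by blast
  then have "(\<lambda>h. h \<otimes> y) -` A \<inter> space \<mu> = (\<lambda>h. h \<otimes> inv y) ` A"
    using y by (force simp: space_eq m_assoc image_iff)
  then show "emeasure (distr \<mu> \<mu> (\<lambda>h. h \<otimes> y)) A = emeasure \<mu> A"
    using emeasure_distr[OF measurable_mult_right[OF y] A] emeasure_image_mult_right[OF inv_closed[OF y] A]
    by simp
qed simp

lemma mult_right_image_relatively_open: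
  assumes A: "open A" and c: "c \<in> carrier G"
  shows "\<exists>B. open B \<and> B \<inter> carrier G = (\<lambda>h. h \<otimes> c) ` (A \<inter> carrier G)"
proof -
  have "continuous_on (carrier G) (\<lambda>h. h \<otimes> inv c)"
    using c by (simp add: continuous_on_mult_right)
  then obtain B where "open B" "B \<inter> carrier G = (\<lambda>h. h \<otimes> inv c) -` A \<inter> carrier G"
    using A unfolding continuous_on_open_invariant by blast
  moreover have "(\<lambda>h. h \<otimes> inv c) -` A \<inter> carrier G = (\<lambda>h. h \<otimes> c) ` (A \<inter> carrier G)"
  proof (intro equalityI subsetI)
    fix g assume g: "g \<in> (\<lambda>h. h \<otimes> inv c) -` A \<inter> carrier G"
    then have "g = (g \<otimes> inv c) \<otimes> c"
      using c by (simp add: m_assoc)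
    then show "g \<in> (\<lambda>h. h \<otimes> c) ` (A \<inter> carrier G)"
      using g c by blast
  next
    fix g assume "g \<in> (\<lambda>h. h \<otimes> c) ` (A \<inter> carrier G)"
    then show "g \<in> (\<lambda>h. h \<otimes> inv c) -` A \<inter> carrier G"
      using c by (auto simp: m_assoc)
  qed
  ultimately show ?thesis by auto
qed

text \<open>Finitely many right translates of a nonempty relatively open set cover the compact group,
  and all of them have the same Haar measure.\<close>

lemma measure_relatively_open_pos:
  assumes A: "open A" and x: "x \<in> A \<inter> carrier G"
  shows "0 < measure \<mu> (A \<inter> carrier G)"
proof -
  define U where "U = A \<inter> carrier G"
  obtain B where B: "\<And>c. c \<in> carrier G \<Longrightarrow> open (B c)"
    "\<And>c. c \<in> carrier G \<Longrightarrow> B c \<inter> carrier G = (\<lambda>h. h \<otimes> c) ` U"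
    using mult_right_image_relatively_open[OF A] unfolding U_def by metis
  have "carrier G \<subseteq> (\<Union>c\<in>carrier G. B c)"
  proof
    fix z assume z: "z \<in> carrier G"
    then have "z \<in> (\<lambda>h. h \<otimes> (inv x \<otimes> z)) ` U"
      using x unfolding U_def by (intro image_eqI[of _ _ x]) (simp_all add: m_assoc[symmetric])
    moreover have c: "inv x \<otimes> z \<in> carrier G"
      using x z by simp
    ultimately have "z \<in> B (inv x \<otimes> z)"
      using B(2)[OF c] by (metis IntD1)
    then show "z \<in> (\<Union>c\<in>carrier G. B c)"
      using c by blast
  qed
  then obtain K where K: "K \<subseteq> carrier G" "finite K" "carrier G \<subseteq> (\<Union>c\<in>K. B c)"
    using compactE_image[OF compact_carrier, of "carrier G" B] B(1) by blast
  have sets_translate: "B c \<inter> carrier G \<in> sets \<mu>" if "c \<in> K" for c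
    using B(1) K(1) that by (simp add: subset_iff sets_relatively_open)
  have measure_translate: "measure \<mu> (B c \<inter> carrier G) = measure \<mu> U" if "c \<in> K" for c
    using B(2) K(1) that emeasure_image_mult_right[OF _ sets_relatively_open[OF A]]
    unfolding U_def measure_def by (simp add: subset_iff)
  have "(\<Union>c\<in>K. B c \<inter> carrier G) = space \<mu>"
    using K(3) space_eq by blast
  then have "1 = measure \<mu> (\<Union>c\<in>K. B c \<inter> carrier G)"
    by (simp add: prob_space)
  also have "\<dots> \<le> (\<Sum>c\<in>K. measure \<mu> (B c \<inter> carrier G))"
    using K(2) sets_translate by (intro measure_UNION_le) auto
  also have "\<dots> = card K * measure \<mu> U"
    using measure_translate by simp
  finally have "measure \<mu> U \<noteq> 0"
    by auto
  then show ?thesis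
    unfolding U_def using measure_nonneg[of \<mu> "A \<inter> carrier G"] by linarith
qed

lemma continuous_nonneg_integral_eq_0_imp_zero:
  fixes h :: "'g \<Rightarrow> real"
  assumes h: "continuous_on (carrier G) h" and nonneg: "\<And>x. x \<in> carrier G \<Longrightarrow> 0 \<le> h x"
    and zero: "(\<integral>g. h g \<partial>\<mu>) = 0" and x: "x \<in> carrier G"
  shows "h x = 0"
proof (rule ccontr)
  assume "h x \<noteq> 0"
  then have "0 < h x" using nonneg[OF x] by simp
  obtain A where A: "open A" "A \<inter> carrier G = h -` {0<..} \<inter> carrier G"
    using h open_greaterThan[of 0] unfolding continuous_on_open_invariant by blast
  have "AE g in \<mu>. 0 \<le> h g"
    using nonneg space_eq by (intro AE_I2) simp
  then have "AE g in \<mu>. h g = 0"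
    using integral_nonneg_eq_0_iff_AE[OF integrable_continuous_on_carrier[OF h]] zero by simp
  moreover have N: "{g \<in> space \<mu>. h g \<noteq> 0} \<in> sets \<mu>"
    using measurable_continuous_on_carrier[OF h] by measurable
  ultimately have "emeasure \<mu> {g \<in> space \<mu>. h g \<noteq> 0} = 0"
    using AE_iff_measurable[OF N, of "\<lambda>g. h g = 0"] by simp
  moreover have "A \<inter> carrier G \<subseteq> {g \<in> space \<mu>. h g \<noteq> 0}"
    using A(2) space_eq by auto
  ultimately have "emeasure \<mu> (A \<inter> carrier G) = 0"
    using emeasure_mono[OF _ N, of "A \<inter> carrier G"] by simp
  then have "measure \<mu> (A \<inter> carrier G) = 0"
    by (simp add: measure_def)
  then show False
    using measure_relatively_open_pos[OF A(1)] A(2) x \<open>0 < h x\<close> by auto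
qed


lemma span_orbit_closed:
  assumes linear_T: "\<And>g. linear (T g)"
    and T_mult: "\<And>g h. g \<in> carrier G \<Longrightarrow> h \<in> carrier G \<Longrightarrow> T (g \<otimes> h) = T g \<circ> T h"
    and y: "y \<in> carrier G" and w: "w \<in> span ((\<lambda>g. T g w0) ` carrier G)"
  shows "T y w \<in> span ((\<lambda>g. T g w0) ` carrier G)"
proof -
  have "T y ` (\<lambda>g. T g w0) ` carrier G \<subseteq> (\<lambda>g. T g w0) ` carrier G"
    unfolding image_image
  proof (rule image_subsetI)
    fix g assume "g \<in> carrier G"
    then show "T y (T g w0) \<in> (\<lambda>g. T g w0) ` carrier G"
      using T_mult[OF y] y by (intro image_eqI[of _ _ "y \<otimes> g"]) auto
  qed
  then have "span (T y ` (\<lambda>g. T g w0) ` carrier G) \<subseteq> span ((\<lambda>g. T g w0) ` carrier G)"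
    by (rule span_mono)
  then have "T y ` span ((\<lambda>g. T g w0) ` carrier G) \<subseteq> span ((\<lambda>g. T g w0) ` carrier G)"
    unfolding span_linear_image[OF linear_T] .
  then show ?thesis
    using w by blast
qed

lemma matrix_coefficient_sq_le:
  fixes T :: "'g \<Rightarrow> 'v::euclidean_space \<Rightarrow> 'v" and L :: "'v \<Rightarrow> real"
  assumes linear_T: "\<And>g. linear (T g)"
    and T_mult: "\<And>g h. g \<in> carrier G \<Longrightarrow> h \<in> carrier G \<Longrightarrow> T (g \<otimes> h) = T g \<circ> T h"
    and continuous_T: "\<And>w. continuous_on (carrier G) (\<lambda>g. T g w)"
    and L: "linear L" and W: "subspace W"
    and invariant: "\<And>g w. g \<in> carrier G \<Longrightarrow> w \<in> W \<Longrightarrow> T g w \<in> W"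
    and w: "w \<in> W" and x: "x \<in> carrier G"
  shows "(L (T x w))\<^sup>2 \<le> dim W * (\<integral>g. (L (T g w))\<^sup>2 \<partial>\<mu>)"
proof -
  have continuous: "continuous_on (carrier G) (\<lambda>g. L (T g u) * L (T g w))" for u w
    using bounded_linear.continuous_on[OF L[unfolded linear_conv_bounded_linear] continuous_T]
    by (intro continuous_intros)
  have linear_coefficient: "linear (\<lambda>w. L (T g w))" for g
    using linear_compose[OF linear_T L] by (simp add: comp_def)
  have integrable: "integrable \<mu> (\<lambda>g. L (T g u) * L (T g w))" for u w
    by (rule integrable_continuous_on_carrier[OF continuous])
  have null: "L (T x w) = 0"
    if "w \<in> W" "(\<integral>g. L (T g w) * L (T g w) \<partial>\<mu>) = 0" "x \<in> carrier G" for w x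
    using continuous_nonneg_integral_eq_0_imp_zero[OF continuous _ that(2,3)] by simp
  have translate: "\<exists>w'\<in>W. \<forall>g\<in>carrier G. L (T g w') = L (T (g \<otimes> y) w)"
    if "y \<in> carrier G" "w \<in> W" for y w
    using that invariant T_mult by auto
  interpret right_invariant_function_space G \<mu> "\<lambda>w g. L (T g w)" W
    by intro_locales
      (rule right_invariant_function_space_axioms.intro[OF space_eq measurable_mult_right
          distr_mult_right linear_coefficient integrable null W translate])
  show ?thesis
    using eval_sq_le_dim_mult_gram[OF w x] unfolding gram_def by (simp add: power2_eq_square)
qed

lemma action_coefficient_power_sq_le:
  fixes \<rho> :: "'g \<Rightarrow> real^'n^'n" and l :: "real^'n \<Rightarrow> real"
  assumes \<rho>: "continuous_linear_action G \<rho>" and l: "linear l" and x: "x \<in> carrier G"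
  shows "(l (\<rho> x *v v) ^ CARD('k))\<^sup>2
    \<le> dim (span ((\<lambda>g. tensor_act (\<rho> g) (tensor_pow v :: real^('n^'k))) ` carrier G))
      * (\<integral>g. (l (\<rho> g *v v) ^ CARD('k))\<^sup>2 \<partial>\<mu>)"
proof -
  have \<rho>_one: "\<rho> \<one> = mat 1"
    and \<rho>_mult: "\<And>g h. g \<in> carrier G \<Longrightarrow> h \<in> carrier G \<Longrightarrow> \<rho> (g \<otimes> h) = \<rho> g ** \<rho> h"
    and \<rho>_continuous: "continuous_on (carrier G) \<rho>"
    using \<rho> unfolding continuous_linear_action_def by auto
  define T :: "'g \<Rightarrow> real^('n^'k) \<Rightarrow> real^('n^'k)" where "T g = tensor_act (\<rho> g)" for g
  define W where "W = span ((\<lambda>g. T g (tensor_pow v)) ` carrier G)"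
  define c where "c = adjoint l 1"
  have "l u = c \<bullet> u" for u
    using adjoint_clauses(2)[OF l, of 1 u] unfolding c_def by simp
  then have coefficient: "tensor_pow c \<bullet> T g (tensor_pow v) = l (\<rho> g *v v) ^ CARD('k)" for g
    unfolding T_def tensor_act_tensor_pow inner_tensor_pow by simp
  have linear_T: "linear (T g)" for g
    unfolding T_def by (rule linear_tensor_act)
  have T_mult: "T (g \<otimes> h) = T g \<circ> T h" if "g \<in> carrier G" "h \<in> carrier G" for g h
    using \<rho>_mult[OF that] by (simp add: T_def fun_eq_iff tensor_act_tensor_act)
  have continuous_T: "continuous_on (carrier G) (\<lambda>g. T g w)" for w
    unfolding T_def by (rule continuous_on_tensor_act[OF \<rho>_continuous])
  have "T \<one> (tensor_pow v) = tensor_pow v"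
    unfolding T_def \<rho>_one tensor_act_tensor_pow by simp
  then have v_in_W: "tensor_pow v \<in> W"
    unfolding W_def by (metis one_closed image_eqI span_base)
  have subspace_W: "subspace W"
    unfolding W_def by (rule subspace_span)
  have W_invariant: "T g w \<in> W" if "g \<in> carrier G" "w \<in> W" for g w
    using span_orbit_closed[OF linear_T T_mult that(1)] that(2) unfolding W_def by blast
  have "(tensor_pow c \<bullet> T x (tensor_pow v))\<^sup>2
      \<le> dim W * (\<integral>g. (tensor_pow c \<bullet> T g (tensor_pow v))\<^sup>2 \<partial>\<mu>)"
    by (rule matrix_coefficient_sq_le[OF linear_T T_mult continuous_T
          bounded_linear.linear[OF bounded_linear_inner_right] subspace_W
          W_invariant v_in_W x])
  then have "(l (\<rho> x *v v) ^ CARD('k))\<^sup>2 \<le> dim W * (\<integral>g. (l (\<rho> g *v v) ^ CARD('k))\<^sup>2 \<partial>\<mu>)"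
    by (simp only: coefficient)
  then show ?thesis
    unfolding W_def T_def .
qed

end

section \<open>Sup norm versus even L^p norms\<close>

lemma (in prob_space) Lp_norm_even_le:
  assumes "0 < p" "even p" "integrable M (\<lambda>x. f x ^ p)"
    and bound: "\<And>x. x \<in> space M \<Longrightarrow> \<bar>f x\<bar> \<le> B"
  shows "Lp_norm_even M p f \<le> B"
proof -
  have "0 \<le> B"
    using bound not_empty by fastforce
  have "f x ^ p \<le> B ^ p" if "x \<in> space M" for x
    using power_mono[OF bound[OF that] abs_ge_zero] power_even_abs[OF \<open>even p\<close>] by metis
  then have "(\<integral>x. f x ^ p \<partial>M) \<le> (\<integral>x. B ^ p \<partial>M)"
    using assms(3) by (intro integral_mono) auto
  moreover have "0 \<le> (\<integral>x. f x ^ p \<partial>M)"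
    using \<open>even p\<close> by (intro integral_nonneg_AE AE_I2) (simp add: zero_le_even_power)
  ultimately have "(\<integral>x. f x ^ p \<partial>M) powr (1 / p) \<le> (B ^ p) powr (1 / p)"
    by (intro powr_mono2) (simp_all add: prob_space)
  also have "\<dots> = B"
    using \<open>0 \<le> B\<close> \<open>0 < p\<close> by (simp add: root_powr_inverse[symmetric] real_root_power_cancel)
  finally show ?thesis
    unfolding Lp_norm_even_def .
qed

lemma le_Lp_norm_even:
  assumes "0 < p" "even p" "0 \<le> M" "0 \<le> D"
    and bound: "M ^ p \<le> D * (\<integral>g. f g ^ p \<partial>\<mu>)"
  shows "M \<le> D powr (1 / p) * Lp_norm_even \<mu> p f"
proof -
  have integral_nonneg: "0 \<le> (\<integral>g. f g ^ p \<partial>\<mu>)"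
    using \<open>even p\<close> by (intro integral_nonneg_AE AE_I2) (simp add: zero_le_even_power)
  have "M = (M ^ p) powr (1 / p)"
    using \<open>0 \<le> M\<close> \<open>0 < p\<close> by (simp add: root_powr_inverse[symmetric] real_root_power_cancel)
  also have "\<dots> \<le> (D * (\<integral>g. f g ^ p \<partial>\<mu>)) powr (1 / p)"
    using bound \<open>0 \<le> M\<close> by (intro powr_mono2) simp_all
  also have "\<dots> = D powr (1 / p) * Lp_norm_even \<mu> p f"
    unfolding Lp_norm_even_def using integral_nonneg \<open>0 \<le> D\<close> by (simp add: powr_mult)
  finally show ?thesis .
qed

lemma sup_norm_eq_max:
  assumes "x0 \<in> carrier G" "\<And>y. y \<in> carrier G \<Longrightarrow> \<bar>f y\<bar> \<le> \<bar>f x0\<bar>"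
  shows "sup_norm G f = \<bar>f x0\<bar>"
  unfolding sup_norm_def using assms by (intro cSup_eq_maximum) auto

theorem corollary1p4:
  fixes G :: "('g::topological_space, 'b) monoid_scheme"
    and \<mu> :: "'g measure"
    and \<rho> :: "'g \<Rightarrow> real^'n^'n"
    and v :: "real^'n"
    and l :: "real^'n \<Rightarrow> real"
    and f :: "'g \<Rightarrow> real"
    and D :: nat
  assumes "compact_group G"
    and "haar_prob G \<mu>"
    and "continuous_linear_action G \<rho>"
    and "linear l"
    and "\<And>g. f g = l (\<rho> g *v v)"
    and "D = dim (span ((\<lambda>g. tensor_act (\<rho> g) (tensor_pow v :: real^('n^'k))) ` carrier G))"
  shows "Lp_norm_even \<mu> (2 * CARD('k)) f \<le> sup_norm G f
       \<and> sup_norm G f \<le> real D powr (1 / (2 * CARD('k))) * Lp_norm_even \<mu> (2 * CARD('k)) f"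
proof -
  interpret compact_haar_group G \<mu>
    using assms(1,2) by unfold_locales
  have f_eq: "f = (\<lambda>g. l (\<rho> g *v v))"
    using assms(5) by blast
  have "continuous_on (carrier G) \<rho>"
    using assms(3) unfolding continuous_linear_action_def by simp
  then have f_continuous: "continuous_on (carrier G) f"
    unfolding f_eq by (rule continuous_on_linear_matrix_vector[OF assms(4)])
  obtain x0 where x0: "x0 \<in> carrier G" and x0_max: "\<And>y. y \<in> carrier G \<Longrightarrow> \<bar>f y\<bar> \<le> \<bar>f x0\<bar>"
    using continuous_attains_sup[OF compact_carrier _ continuous_on_rabs[OF f_continuous]] by blast
  have "(l (\<rho> x0 *v v) ^ CARD('k))\<^sup>2 \<le> D * (\<integral>g. (l (\<rho> g *v v) ^ CARD('k))\<^sup>2 \<partial>\<mu>)"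
    unfolding assms(6) by (rule action_coefficient_power_sq_le[OF assms(3,4) x0])
  then have "\<bar>f x0\<bar> ^ (2 * CARD('k)) \<le> D * (\<integral>g. f g ^ (2 * CARD('k)) \<partial>\<mu>)"
    unfolding assms(5)[symmetric] by (simp add: power_even_abs power_mult[symmetric] mult.commute)
  then have "\<bar>f x0\<bar> \<le> real D powr (1 / real (2 * CARD('k))) * Lp_norm_even \<mu> (2 * CARD('k)) f"
    by (intro le_Lp_norm_even) auto
  moreover have "Lp_norm_even \<mu> (2 * CARD('k)) f \<le> \<bar>f x0\<bar>"
    using x0_max space_eq f_continuous
    by (intro Lp_norm_even_le integrable_continuous_on_carrier continuous_intros) auto
  ultimately show ?thesis
    using sup_norm_eq_max[where f = f, OF x0 x0_max] by simp
qed

end
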